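(* Let $AP=\{p\}$. For $n\ge1$ let $\mathcal{T}_n$ be the Kripke tree over $AP$ consisting of an infinite main path $\pi(0)\pi(1)\cdots$ from the root, all labelled $\emptyset$, such that $\pi(n+1)$ has exactly one child (namely $\pi(n+2)$), and every $\pi(i)$ with $i\ne n+1$ has exactly two children, $\pi(i+1)$ and a node $w_i$, where the subtree rooted at $w_i$ is a single infinite path whose labels are $\{p\},\emptyset,\emptyset,\emptyset,\dots$. Then for every $n\ge1$ and every CCTL$^*$ state formula $\varphi$ over $AP$ with $|\varphi|\le n$, we have $\mathcal{T}_n\models\varphi$ if and only if $\mathcal{T}_{n+1}\models\varphi$.
   Context: A Kripke tree over $AP$ is a non-blocking tree (nonempty prefix-closed set of words over some set of directions, every node having a child) with a labelling of nodes by subsets of $AP$; an infinite path starting at $w$ is a sequence of nodes $\pi(0)=w,\pi(1),\dots$ with each $\pi(k+1)$ a child of $\pi(k)$. CCTL$^*$: state formulas $\varphi::=\top\mid p\mid\neg\varphi\mid\varphi\wedge\varphi\mid\mathsf{E}\psi\mid\mathsf{D}^k\varphi$ ($k\ge1$), path formulas $\psi::=\varphi\mid\neg\psi\mid\psi\wedge\psi\mid\mathsf{X}\psi\mid\psi\mathsf{U}\psi$. $(\mathcal{T},w)\models p$ iff $p\in\mathit{Lab}(w)$; $(\mathcal{T},w)\models\mathsf{E}\psi$ iff $(\mathcal{T},\pi,0)\models\psi$ for some infinite path $\pi$ starting at $w$; $(\mathcal{T},w)\models\mathsf{D}^k\varphi$ iff at least $k$ distinct children of $w$ satisfy $\varphi$;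 $(\mathcal{T},\pi,i)\models\varphi$ iff $(\mathcal{T},\pi(i))\models\varphi$; $(\mathcal{T},\pi,i)\models\mathsf{X}\psi$ iff $(\mathcal{T},\pi,i+1)\models\psi$; $(\mathcal{T},\pi,i)\models\psi_1\mathsf{U}\psi_2$ iff for some $j\ge i$, $(\mathcal{T},\pi,j)\models\psi_2$ and $(\mathcal{T},\pi,k)\models\psi_1$ for $i\le k<j$; Booleans standard. $\mathcal{T}\models\varphi$ means $(\mathcal{T},\varepsilon)\models\varphi$. $|\varphi|$ denotes the length (size) of the formula $\varphi$, i.e. its number of symbols, so that proper subformulas are strictly shorter. *)

theory Defs
  imports Main
begin

definition children :: "'d list set \<Rightarrow> 'd list \<Rightarrow> 'd list set" where
  "children T w = {v. v \<in> T \<and> (\<exists>d. v = w @ [d])}"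

definition kripke_tree :: "'d list set \<Rightarrow> bool" where
  "kripke_tree T \<longleftrightarrow> T \<noteq> {} \<and> (\<forall>u v. u @ v \<in> T \<longrightarrow> u \<in> T)
     \<and> (\<forall>w\<in>T. children T w \<noteq> {})"

definition is_path :: "'d list set \<Rightarrow> 'd list \<Rightarrow> (nat \<Rightarrow> 'd list) \<Rightarrow> bool" where
  "is_path T w \<pi> \<longleftrightarrow> \<pi> 0 = w \<and> (\<forall>k. \<pi> (Suc k) \<in> children T (\<pi> k))"

datatype 'ap sform =
    STrue
  | Prop 'ap
  | SNot "'ap sform"
  | SAnd "'ap sform" "'ap sform"
  | Ex "'ap pform"
  | Dk nat "'ap sform"
and 'ap pform =
    PState "'ap sform"
  | PNot "'ap pform"
  | PAnd "'ap pform" "'ap pform"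
  | Next "'ap pform"
  | Until "'ap pform" "'ap pform"

primrec wf_s :: "'ap sform \<Rightarrow> bool" and wf_p :: "'ap pform \<Rightarrow> bool" where
  "wf_s STrue = True"
| "wf_s (Prop a) = True"
| "wf_s (SNot f) = wf_s f"
| "wf_s (SAnd f g) = (wf_s f \<and> wf_s g)"
| "wf_s (Ex p) = wf_p p"
| "wf_s (Dk k f) = (1 \<le> k \<and> wf_s f)"
| "wf_p (PState f) = wf_s f"
| "wf_p (PNot p) = wf_p p"
| "wf_p (PAnd p q) = (wf_p p \<and> wf_p q)"
| "wf_p (Next p) = wf_p p"
| "wf_p (Until p q) = (wf_p p \<and> wf_p q)"

primrec ssize :: "'ap sform \<Rightarrow> nat" and psize :: "'ap pform \<Rightarrow> nat" where
  "ssize STrue = 1"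
| "ssize (Prop a) = 1"
| "ssize (SNot f) = 1 + ssize f"
| "ssize (SAnd f g) = 1 + ssize f + ssize g"
| "ssize (Ex p) = 1 + psize p"
| "ssize (Dk k f) = 1 + ssize f"
| "psize (PState f) = ssize f"
| "psize (PNot p) = 1 + psize p"
| "psize (PAnd p q) = 1 + psize p + psize q"
| "psize (Next p) = 1 + psize p"
| "psize (Until p q) = 1 + psize p + psize q"

primrec ssat :: "'d list set \<Rightarrow> ('d list \<Rightarrow> 'ap set) \<Rightarrow> 'ap sform \<Rightarrow> 'd list \<Rightarrow> bool"
  and psat :: "'d list set \<Rightarrow> ('d list \<Rightarrow> 'ap set) \<Rightarrow> 'ap pform \<Rightarrow> (nat \<Rightarrow> 'd list) \<Rightarrow> nat \<Rightarrow> bool"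
where
  "ssat T L STrue w = True"
| "ssat T L (Prop a) w = (a \<in> L w)"
| "ssat T L (SNot f) w = (\<not> ssat T L f w)"
| "ssat T L (SAnd f g) w = (ssat T L f w \<and> ssat T L g w)"
| "ssat T L (Ex p) w = (\<exists>\<pi>. is_path T w \<pi> \<and> psat T L p \<pi> 0)"
| "ssat T L (Dk k f) w =
     (\<exists>S. S \<subseteq> children T w \<and> finite S \<and> card S = k \<and> (\<forall>v\<in>S. ssat T L f v))"
| "psat T L (PState f) \<pi> i = ssat T L f (\<pi> i)"
| "psat T L (PNot p) \<pi> i = (\<not> psat T L p \<pi> i)"
| "psat T L (PAnd p q) \<pi> i = (psat T L p \<pi> i \<and> psat T L q \<pi> i)"
| "psat T L (Next p) \<pi> i = psat T L p \<pi> (Suc i)"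
| "psat T L (Until p q) \<pi> i =
     (\<exists>j\<ge>i. psat T L q \<pi> j \<and> (\<forall>k. i \<le> k \<and> k < j \<longrightarrow> psat T L p \<pi> k))"

definition models :: "'d list set \<Rightarrow> ('d list \<Rightarrow> 'ap set) \<Rightarrow> 'ap sform \<Rightarrow> bool" where
  "models T L f = ssat T L f []"

text \<open>AP = {p} is modelled by the type unit (p = ()). Directions are nat:
  0 continues the main path, 1 branches off to w_i. The main path node
  pi(i) is replicate i 0; w_i = pi(i) @ [1]; the subtree at w_i is the single
  path w_i @ replicate j 0. The branch w_{n+1} is omitted.\<close>

definition Tn :: "nat \<Rightarrow> nat list set" where
  "Tn n = {replicate i 0 | i. True}
        \<union> {replicate i 0 @ [1] @ replicate j 0 | i j. i \<noteq> n + 1}"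

definition Ln :: "nat \<Rightarrow> nat list \<Rightarrow> unit set" where
  "Ln n w = (if \<exists>i. i \<noteq> n + 1 \<and> w = replicate i 0 @ [1] then {()} else {})"

end

theory Submission
  imports Defs
begin

text \<open>
  The tree \<open>T\<^sub>N\<close> is the unfolding of a small Kripke structure whose states are the
  kinds of nodes: a main-path node is determined by its distance \<open>a\<close> from the node
  \<open>\<pi>(N+1)\<close> that has lost its side branch, and all other nodes collapse into three
  states. The collapsing map is a bijection on successors, so it preserves CCTL* truth,
  counting included, and the root of \<open>T\<^sub>N\<close> becomes \<open>Main (N+1)\<close>. It remains to show
  that \<open>Main a\<close> and \<open>Main (a+1)\<close> satisfy the same state formulas of size at most \<open>a\<close>.

  The paths from \<open>Main a\<close> are descents \<open>Main (k+z), \<dots>, Main z\<close> of length \<open>k+1\<close> with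
  \<open>k + z = a\<close>, followed by a side path (\<open>z \<ge> 1\<close>) or by the main path below \<open>\<pi>(N+1)\<close>
  (\<open>z = 0\<close>). By simultaneous induction, a path formula \<open>q\<close> does not notice one more
  step at the top of a descent once \<open>k \<ge> \<alpha>\<close> and \<open>k + z \<ge> \<gamma>\<close>, nor a shift of the
  whole descent one level up once \<open>z \<ge> \<beta>\<close>, for some \<open>\<alpha>, \<beta>, \<gamma>\<close> with
  \<open>\<alpha> + \<beta> \<le> |q| + 1\<close> and \<open>\<gamma> \<le> |q| + 1\<close>. For \<open>E q\<close> at \<open>Main a\<close> with \<open>a > |q|\<close>
  every descent is long (\<open>k \<ge> \<alpha>\<close>) or high (\<open>z \<ge> \<beta>\<close>), so it can be lengthened or
  raised to a path from \<open>Main (a+1)\<close>, and conversely.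
\<close>

section \<open>CCTL* on Kripke structures\<close>

definition ks_path :: "('s \<Rightarrow> 's set) \<Rightarrow> 's \<Rightarrow> (nat \<Rightarrow> 's) \<Rightarrow> bool" where
  "ks_path S x \<rho> \<longleftrightarrow> \<rho> 0 = x \<and> (\<forall>t. \<rho> (Suc t) \<in> S (\<rho> t))"

primrec ks_ssat :: "('s \<Rightarrow> 's set) \<Rightarrow> ('s \<Rightarrow> 'ap set) \<Rightarrow> 'ap sform \<Rightarrow> 's \<Rightarrow> bool"
  and ks_psat :: "('s \<Rightarrow> 's set) \<Rightarrow> ('s \<Rightarrow> 'ap set) \<Rightarrow> 'ap pform \<Rightarrow> (nat \<Rightarrow> 's) \<Rightarrow> nat \<Rightarrow> bool"
where
  "ks_ssat S L STrue x = True"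
| "ks_ssat S L (Prop a) x = (a \<in> L x)"
| "ks_ssat S L (SNot f) x = (\<not> ks_ssat S L f x)"
| "ks_ssat S L (SAnd f g) x = (ks_ssat S L f x \<and> ks_ssat S L g x)"
| "ks_ssat S L (Ex p) x = (\<exists>\<rho>. ks_path S x \<rho> \<and> ks_psat S L p \<rho> 0)"
| "ks_ssat S L (Dk k f) x =
     (\<exists>C. C \<subseteq> S x \<and> finite C \<and> card C = k \<and> (\<forall>v\<in>C. ks_ssat S L f v))"
| "ks_psat S L (PState f) \<rho> i = ks_ssat S L f (\<rho> i)"
| "ks_psat S L (PNot p) \<rho> i = (\<not> ks_psat S L p \<rho> i)"
| "ks_psat S L (PAnd p q) \<rho> i = (ks_psat S L p \<rho> i \<and> ks_psat S L q \<rho> i)"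
| "ks_psat S L (Next p) \<rho> i = ks_psat S L p \<rho> (Suc i)"
| "ks_psat S L (Until p q) \<rho> i =
     (\<exists>j\<ge>i. ks_psat S L q \<rho> j \<and> (\<forall>k. i \<le> k \<and> k < j \<longrightarrow> ks_psat S L p \<rho> k))"

lemma ssat_eq_ks_ssat_children:
  "ssat T L f w = ks_ssat (children T) L f w"
  "psat T L q \<pi> i = ks_psat (children T) L q \<pi> i"
  by (induction f and q arbitrary: w and \<pi> i) (simp_all add: is_path_def ks_path_def)

lemma ex_until_Suc_iff:
  "(\<exists>j\<ge>Suc i. A j \<and> (\<forall>k. Suc i \<le> k \<and> k < j \<longrightarrow> B k)) \<longleftrightarrow>
   (\<exists>j\<ge>i. A (Suc j) \<and> (\<forall>k. i \<le> k \<and> k < j \<longrightarrow> B (Suc k)))"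
proof
  assume "\<exists>j\<ge>Suc i. A j \<and> (\<forall>k. Suc i \<le> k \<and> k < j \<longrightarrow> B k)"
  then obtain j where "Suc i \<le> j" "A j" "\<forall>k. Suc i \<le> k \<and> k < j \<longrightarrow> B k" by blast
  then show "\<exists>j\<ge>i. A (Suc j) \<and> (\<forall>k. i \<le> k \<and> k < j \<longrightarrow> B (Suc k))"
    by (intro exI[of _ "j - 1"]) auto
next
  assume "\<exists>j\<ge>i. A (Suc j) \<and> (\<forall>k. i \<le> k \<and> k < j \<longrightarrow> B (Suc k))"
  then obtain j where j: "i \<le> j" "A (Suc j)" and B: "\<forall>k. i \<le> k \<and> k < j \<longrightarrow> B (Suc k)" by blast
  show "\<exists>j\<ge>Suc i. A j \<and> (\<forall>k. Suc i \<le> k \<and> k < j \<longrightarrow> B k)"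
  proof (intro exI[of _ "Suc j"] conjI allI impI)
    fix k assume "Suc i \<le> k \<and> k < Suc j"
    then obtain k' where "k = Suc k'" "i \<le> k'" "k' < j" by (cases k) auto
    then show "B k" using B by simp
  qed (use j in simp_all)
qed

lemma ks_psat_Suc:
  "ks_psat S L q \<rho> (Suc i) = ks_psat S L q (\<lambda>t. \<rho> (Suc t)) i"
proof (induction q arbitrary: i)
  case (Until p q)
  then show ?case by (simp only: ks_psat.simps ex_until_Suc_iff)
qed simp_all

lemma ks_psat_Until_unfold:
  "ks_psat S L (Until p q) \<rho> i \<longleftrightarrow>
     ks_psat S L q \<rho> i \<or> (ks_psat S L p \<rho> i \<and> ks_psat S L (Until p q) \<rho> (Suc i))"
  (is "?U \<longleftrightarrow> _")
proof
  assume ?U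
  then obtain j where j: "j \<ge> i" "ks_psat S L q \<rho> j" "\<forall>k. i \<le> k \<and> k < j \<longrightarrow> ks_psat S L p \<rho> k"
    by auto
  show "ks_psat S L q \<rho> i \<or> (ks_psat S L p \<rho> i \<and> ks_psat S L (Until p q) \<rho> (Suc i))"
  proof (cases "j = i")
    case False
    then show ?thesis using j by (auto intro!: exI[of _ j])
  qed (use j in simp)
next
  assume "ks_psat S L q \<rho> i \<or> (ks_psat S L p \<rho> i \<and> ks_psat S L (Until p q) \<rho> (Suc i))"
  then show ?U
  proof
    assume "ks_psat S L p \<rho> i \<and> ks_psat S L (Until p q) \<rho> (Suc i)"
    then obtain j where j: "Suc i \<le> j" "ks_psat S L q \<rho> j"
      and p: "ks_psat S L p \<rho> i" "\<forall>k. Suc i \<le> k \<and> k < j \<longrightarrow> ks_psat S L p \<rho> k"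
      by auto
    then have "\<forall>k. i \<le> k \<and> k < j \<longrightarrow> ks_psat S L p \<rho> k"
      by (metis Suc_le_eq le_neq_implies_less)
    then show ?U using j Suc_leD by (simp only: ks_psat.simps) blast
  qed auto
qed

lemma ks_path_stays_in:
  assumes "\<forall>y\<in>X. S y \<subseteq> X" and "x \<in> X" and "ks_path S x \<rho>"
  shows "\<rho> t \<in> X"
  by (induction t) (use assms in \<open>auto simp: ks_path_def\<close>)

lemma ks_path_lift:
  assumes closed: "\<forall>y\<in>X. S y \<subseteq> X"
    and bij: "\<forall>y\<in>X. bij_betw h (S y) (S' (h y))"
    and "x \<in> X" and \<sigma>: "ks_path S' (h x) \<sigma>"
  obtains \<rho> where "ks_path S x \<rho>" and "h \<circ> \<rho> = \<sigma>"
proof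
  define \<rho> where "\<rho> = rec_nat x (\<lambda>t y. inv_into (S y) h (\<sigma> (Suc t)))"
  have step: "\<rho> (Suc t) \<in> S (\<rho> t) \<and> h (\<rho> (Suc t)) = \<sigma> (Suc t)"
    if "\<rho> t \<in> X" "h (\<rho> t) = \<sigma> t" for t
  proof -
    have "\<sigma> (Suc t) \<in> h ` S (\<rho> t)"
      using \<sigma> bij that by (metis bij_betw_imp_surj_on ks_path_def)
    then show ?thesis by (simp add: \<rho>_def inv_into_into f_inv_into_f)
  qed
  have inv: "\<rho> t \<in> X \<and> h (\<rho> t) = \<sigma> t" for t
  proof (induction t)
    case 0
    then show ?case using \<open>x \<in> X\<close> \<sigma> by (simp add: \<rho>_def ks_path_def)
  next
    case (Suc t)
    then show ?case using step closed by blast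
  qed
  show "ks_path S x \<rho>" using step inv by (simp add: ks_path_def \<rho>_def)
  show "h \<circ> \<rho> = \<sigma>" using inv by auto
qed

lemma bij_betw_ex_card_subset_iff:
  assumes h: "bij_betw h A B" and PQ: "\<And>v. v \<in> A \<Longrightarrow> P v \<longleftrightarrow> Q (h v)"
  shows "(\<exists>C\<subseteq>A. finite C \<and> card C = j \<and> (\<forall>v\<in>C. P v)) \<longleftrightarrow>
         (\<exists>D\<subseteq>B. finite D \<and> card D = j \<and> (\<forall>u\<in>D. Q u))"
proof -
  have image: "finite (h ` C) = finite C \<and> card (h ` C) = card C \<and> (\<forall>u\<in>h ` C. Q u) = (\<forall>v\<in>C. P v)"
    if "C \<subseteq> A" for C
  proof -
    have "inj_on h C" using h that by (meson bij_betw_imp_inj_on inj_on_subset)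
    then show ?thesis using PQ that by (auto simp: finite_image_iff card_image)
  qed
  have "B = h ` A" using h by (simp add: bij_betw_def)
  then have "(\<exists>D\<subseteq>B. finite D \<and> card D = j \<and> (\<forall>u\<in>D. Q u)) \<longleftrightarrow>
        (\<exists>C\<subseteq>A. finite (h ` C) \<and> card (h ` C) = j \<and> (\<forall>u\<in>h ` C. Q u))"
    by (metis subset_image_iff)
  also have "\<dots> \<longleftrightarrow> (\<exists>C\<subseteq>A. finite C \<and> card C = j \<and> (\<forall>v\<in>C. P v))"
    using image by (simp cong: conj_cong)
  finally show ?thesis by simp
qed

theorem ks_sat_covering:
  assumes closed: "\<forall>y\<in>X. S y \<subseteq> X"
    and lab: "\<forall>y\<in>X. L' (h y) = L y"
    and bij: "\<forall>y\<in>X. bij_betw h (S y) (S' (h y))"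
  shows "x \<in> X \<Longrightarrow> ks_ssat S L f x = ks_ssat S' L' f (h x)"
    and "range \<rho> \<subseteq> X \<Longrightarrow> ks_psat S L q \<rho> i = ks_psat S' L' q (h \<circ> \<rho>) i"
proof (induction f and q arbitrary: x and \<rho> i)
  case (Prop a)
  then show ?case using lab by simp
next
  case (Ex q)
  show ?case
  proof
    assume "ks_ssat S L (Ex q) x"
    then obtain \<rho> where \<rho>: "ks_path S x \<rho>" "ks_psat S L q \<rho> 0" by auto
    have X: "range \<rho> \<subseteq> X" using ks_path_stays_in[OF closed Ex.prems \<rho>(1)] by blast
    have "h (\<rho> (Suc t)) \<in> S' (h (\<rho> t))" for t
      using \<rho>(1) X bij by (metis bij_betw_imp_surj_on image_eqI ks_path_def range_subsetD)
    then have "ks_path S' (h x) (h \<circ> \<rho>)"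
      using \<rho>(1) by (simp add: ks_path_def)
    then show "ks_ssat S' L' (Ex q) (h x)"
      using Ex.IH[OF X] \<rho>(2) by (auto simp: comp_def)
  next
    assume "ks_ssat S' L' (Ex q) (h x)"
    then obtain \<sigma> where \<sigma>: "ks_path S' (h x) \<sigma>" "ks_psat S' L' q \<sigma> 0" by auto
    obtain \<rho> where \<rho>: "ks_path S x \<rho>" "h \<circ> \<rho> = \<sigma>" using ks_path_lift[OF closed bij Ex.prems \<sigma>(1)] .
    have "range \<rho> \<subseteq> X" using ks_path_stays_in[OF closed Ex.prems \<rho>(1)] by blast
    then show "ks_ssat S L (Ex q) x" using Ex.IH \<rho> \<sigma>(2) by (auto simp: comp_def)
  qed
next
  case (Dk j g)
  have "bij_betw h (S x) (S' (h x))" using bij Dk.prems by blast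
  moreover have "ks_ssat S L g v \<longleftrightarrow> ks_ssat S' L' g (h v)" if "v \<in> S x" for v
    using Dk closed that by blast
  ultimately show ?case by (simp only: ks_ssat.simps bij_betw_ex_card_subset_iff)
qed auto

lemma ks_psat_case_nat_Suc:
  "ks_psat S L q (case_nat x \<sigma>) (Suc i) = ks_psat S L q \<sigma> i"
  by (simp add: ks_psat_Suc)

lemma ks_path_case_nat_iff:
  "ks_path S x (case_nat x \<sigma>) \<longleftrightarrow> \<sigma> 0 \<in> S x \<and> ks_path S (\<sigma> 0) \<sigma>"
  by (auto simp: ks_path_def split: nat.split)

lemma ks_path_unfold:
  "ks_path S x \<rho> \<longleftrightarrow> \<rho> 0 = x \<and> \<rho> 1 \<in> S x \<and> ks_path S (\<rho> 1) (\<lambda>t. \<rho> (Suc t))"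
  by (auto simp: ks_path_def) (metis not0_implies_Suc)

lemma eq_case_nat_iff: "\<rho> = case_nat x \<sigma> \<longleftrightarrow> \<rho> 0 = x \<and> (\<lambda>t. \<rho> (Suc t)) = \<sigma>"
  by (auto simp: fun_eq_iff split: nat.split)

section \<open>The collapsed structure\<close>

text \<open>
  \<open>Main a\<close> is the main-path node \<open>a\<close> steps above \<open>\<pi>(N+1)\<close>, \<open>Main_inf\<close> any main-path
  node below it, \<open>Branch\<close> a node \<open>w\<^sub>i\<close> and \<open>Tail\<close> any later node of a side path.
\<close>

datatype kind = Main nat | Main_inf | Branch | Tail

fun kind_succ :: "kind \<Rightarrow> kind set" where
  "kind_succ (Main 0) = {Main_inf}"
| "kind_succ (Main (Suc a)) = {Main a, Branch}"
| "kind_succ Main_inf = {Main_inf, Branch}"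
| "kind_succ Branch = {Tail}"
| "kind_succ Tail = {Tail}"

fun kind_lab :: "kind \<Rightarrow> unit set" where
  "kind_lab Branch = {()}"
| "kind_lab _ = {}"

abbreviation ksat :: "unit sform \<Rightarrow> kind \<Rightarrow> bool" where
  "ksat \<equiv> ks_ssat kind_succ kind_lab"

abbreviation kpsat :: "unit pform \<Rightarrow> (nat \<Rightarrow> kind) \<Rightarrow> nat \<Rightarrow> bool" where
  "kpsat \<equiv> ks_psat kind_succ kind_lab"

abbreviation kpath :: "kind \<Rightarrow> (nat \<Rightarrow> kind) \<Rightarrow> bool" where
  "kpath \<equiv> ks_path kind_succ"

primrec descent :: "nat \<Rightarrow> nat \<Rightarrow> (nat \<Rightarrow> kind) \<Rightarrow> nat \<Rightarrow> kind" where
  "descent 0 z \<tau> = case_nat (Main z) \<tau>"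
| "descent (Suc k) z \<tau> = case_nat (Main (Suc k + z)) (descent k z \<tau>)"

definition branch_path :: "nat \<Rightarrow> kind" where
  "branch_path = case_nat Branch (\<lambda>_. Tail)"

lemma descent_at_0 [simp]: "descent k z \<tau> 0 = Main (k + z)"
  by (cases k) simp_all

lemma kpath_descent:
  assumes "kpath x \<tau>" and "x \<in> kind_succ (Main z)"
  shows "kpath (Main (k + z)) (descent k z \<tau>)"
proof -
  have "\<tau> 0 = x" using assms(1) by (simp add: ks_path_def)
  then show ?thesis by (induction k) (use assms in \<open>simp_all add: ks_path_case_nat_iff\<close>)
qed

lemma kpath_branch_path: "kpath Branch branch_path"
  by (auto simp: branch_path_def ks_path_def split: nat.split)

lemma kpath_from_Branch: "kpath Branch \<rho> \<Longrightarrow> \<rho> = branch_path"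
proof -
  assume \<rho>: "kpath Branch \<rho>"
  then have step: "\<rho> (Suc t) \<in> kind_succ (\<rho> t)" and "\<rho> 0 = Branch" for t
    by (simp_all add: ks_path_def)
  have "\<rho> (Suc t) = Tail" for t
  proof (induction t)
    case 0
    then show ?case using step[of 0] \<open>\<rho> 0 = Branch\<close> by simp
  next
    case (Suc t)
    then show ?case using step[of "Suc t"] by simp
  qed
  then show ?thesis using \<open>\<rho> 0 = Branch\<close> by (simp add: branch_path_def eq_case_nat_iff)
qed

lemma kpath_from_Main:
  "kpath (Main a) \<rho> \<Longrightarrow>
   (\<exists>k z. 1 \<le> z \<and> k + z = a \<and> \<rho> = descent k z branch_path) \<or>
   (\<exists>\<tau>. kpath Main_inf \<tau> \<and> \<rho> = descent a 0 \<tau>)"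
proof (induction a arbitrary: \<rho>)
  case 0
  then have "kpath Main_inf (\<lambda>t. \<rho> (Suc t))" "\<rho> 0 = Main 0"
    unfolding ks_path_unfold[of _ _ \<rho>] by auto
  then show ?case by (simp add: eq_case_nat_iff)
next
  case (Suc a)
  then have \<rho>0: "\<rho> 0 = Main (Suc a)" and \<rho>': "kpath (\<rho> 1) (\<lambda>t. \<rho> (Suc t))"
    and "\<rho> 1 \<in> {Main a, Branch}"
    unfolding ks_path_unfold[of _ _ \<rho>] by auto
  then consider "\<rho> 1 = Main a" | "\<rho> 1 = Branch" by blast
  then show ?case
  proof cases
    case 1
    then have "(\<exists>k z. 1 \<le> z \<and> k + z = a \<and> (\<lambda>t. \<rho> (Suc t)) = descent k z branch_path) \<or>
      (\<exists>\<tau>. kpath Main_inf \<tau> \<and> (\<lambda>t. \<rho> (Suc t)) = descent a 0 \<tau>)"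
      using Suc.IH \<rho>' by simp
    then show ?thesis
    proof (elim disjE exE conjE)
      fix k z
      assume "1 \<le> z" "k + z = a" "(\<lambda>t. \<rho> (Suc t)) = descent k z branch_path"
      then have "1 \<le> z \<and> Suc k + z = Suc a \<and> \<rho> = descent (Suc k) z branch_path"
        using \<rho>0 by (simp add: eq_case_nat_iff)
      then show ?thesis by blast
    next
      fix \<tau>
      assume "kpath Main_inf \<tau>" "(\<lambda>t. \<rho> (Suc t)) = descent a 0 \<tau>"
      then have "kpath Main_inf \<tau> \<and> \<rho> = descent (Suc a) 0 \<tau>"
        using \<rho>0 by (simp add: eq_case_nat_iff)
      then show ?thesis by blast
    qed
  next
    case 2
    then have "1 \<le> Suc a \<and> 0 + Suc a = Suc a \<and> \<rho> = descent 0 (Suc a) branch_path"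
      using \<rho>0 \<rho>' kpath_from_Branch by (simp add: eq_case_nat_iff)
    then show ?thesis by blast
  qed
qed

lemma kpath_Main_iff:
  "kpath (Main a) \<rho> \<longleftrightarrow>
     (\<exists>k z. 1 \<le> z \<and> k + z = a \<and> \<rho> = descent k z branch_path) \<or>
     (\<exists>\<tau>. kpath Main_inf \<tau> \<and> \<rho> = descent a 0 \<tau>)"
proof -
  have "kpath (Main (k + z)) (descent k z branch_path)" if "1 \<le> z" for k z
    using that kpath_descent[OF kpath_branch_path, of z k] by (cases z) simp_all
  moreover have "kpath (Main a) (descent a 0 \<tau>)" if "kpath Main_inf \<tau>" for \<tau>
    using that kpath_descent[of Main_inf \<tau> 0 a] by simp
  ultimately show ?thesis using kpath_from_Main by blast
qed

section \<open>Formulas of bounded size cannot measure the main path\<close>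

definition descent_stable :: "unit pform \<Rightarrow> nat \<Rightarrow> nat \<Rightarrow> nat \<Rightarrow> bool" where
  "descent_stable q \<alpha> \<beta> \<gamma> \<longleftrightarrow>
     (\<forall>k z \<tau>. \<alpha> \<le> k \<longrightarrow> \<gamma> \<le> k + z \<longrightarrow>
        kpsat q (descent (Suc k) z \<tau>) 0 = kpsat q (descent k z \<tau>) 0) \<and>
     (\<forall>k z \<tau>. \<beta> \<le> z \<longrightarrow> kpsat q (descent k (Suc z) \<tau>) 0 = kpsat q (descent k z \<tau>) 0)"

lemma descent_stable_stretch:
  "descent_stable q \<alpha> \<beta> \<gamma> \<Longrightarrow> \<alpha> \<le> k \<Longrightarrow> \<gamma> \<le> k + z \<Longrightarrow>
   kpsat q (descent (Suc k) z \<tau>) 0 = kpsat q (descent k z \<tau>) 0"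
  unfolding descent_stable_def by blast

lemma descent_stable_raise:
  "descent_stable q \<alpha> \<beta> \<gamma> \<Longrightarrow> \<beta> \<le> z \<Longrightarrow>
   kpsat q (descent k (Suc z) \<tau>) 0 = kpsat q (descent k z \<tau>) 0"
  unfolding descent_stable_def by blast

lemma descent_stable_mono:
  "descent_stable q \<alpha> \<beta> \<gamma> \<Longrightarrow> \<alpha> \<le> \<alpha>' \<Longrightarrow> \<beta> \<le> \<beta>' \<Longrightarrow> \<gamma> \<le> \<gamma>' \<Longrightarrow>
   descent_stable q \<alpha>' \<beta>' \<gamma>'"
  unfolding descent_stable_def by (meson order_trans)

lemma descent_stable_PState:
  assumes "\<And>a. m \<le> a \<Longrightarrow> ksat f (Main (Suc a)) = ksat f (Main a)"
  shows "descent_stable (PState f) 0 m m"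
  using assms by (simp add: descent_stable_def)

lemma descent_stable_PNot:
  "descent_stable q \<alpha> \<beta> \<gamma> \<Longrightarrow> descent_stable (PNot q) \<alpha> \<beta> \<gamma>"
  by (simp add: descent_stable_def)

lemma descent_stable_PAnd:
  "descent_stable p \<alpha> \<beta> \<gamma> \<Longrightarrow> descent_stable q \<alpha> \<beta> \<gamma> \<Longrightarrow> descent_stable (PAnd p q) \<alpha> \<beta> \<gamma>"
  by (simp add: descent_stable_def)

lemma descent_stable_Next:
  assumes "descent_stable q \<alpha> \<beta> \<gamma>"
  shows "descent_stable (Next q) (Suc \<alpha>) \<beta> (Suc \<gamma>)"
  unfolding descent_stable_def
proof (intro conjI allI impI)
  fix k z \<tau>
  assume "Suc \<alpha> \<le> k" "Suc \<gamma> \<le> k + z"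
  then obtain k' where "k = Suc k'" "\<alpha> \<le> k'" "\<gamma> \<le> k' + z" by (cases k) auto
  then show "kpsat (Next q) (descent (Suc k) z \<tau>) 0 = kpsat (Next q) (descent k z \<tau>) 0"
    using assms by (simp add: descent_stable_def ks_psat_case_nat_Suc)
next
  fix k z \<tau>
  assume "\<beta> \<le> z"
  then show "kpsat (Next q) (descent k (Suc z) \<tau>) 0 = kpsat (Next q) (descent k z \<tau>) 0"
    using assms by (cases k) (simp_all add: descent_stable_def ks_psat_case_nat_Suc)
qed

lemma kpsat_Until_case_nat:
  "kpsat (Until p q) (case_nat x \<sigma>) 0 \<longleftrightarrow>
     kpsat q (case_nat x \<sigma>) 0 \<or> (kpsat p (case_nat x \<sigma>) 0 \<and> kpsat (Until p q) \<sigma> 0)"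
  by (subst ks_psat_Until_unfold) (simp only: ks_psat_case_nat_Suc)

lemma kpsat_Until_descent_0:
  "kpsat (Until p q) (descent 0 z \<tau>) 0 \<longleftrightarrow>
     kpsat q (descent 0 z \<tau>) 0 \<or> (kpsat p (descent 0 z \<tau>) 0 \<and> kpsat (Until p q) \<tau> 0)"
  by (simp only: descent.simps kpsat_Until_case_nat)

lemma kpsat_Until_descent_Suc:
  "kpsat (Until p q) (descent (Suc k) z \<tau>) 0 \<longleftrightarrow>
     kpsat q (descent (Suc k) z \<tau>) 0 \<or>
     (kpsat p (descent (Suc k) z \<tau>) 0 \<and> kpsat (Until p q) (descent k z \<tau>) 0)"
  by (simp only: descent.simps kpsat_Until_case_nat)

lemma descent_stable_Until:
  assumes p: "descent_stable p \<alpha> \<beta> \<gamma>" and q: "descent_stable q \<alpha> \<beta> \<gamma>"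
  shows "descent_stable (Until p q) \<alpha> \<beta> \<gamma>"
  unfolding descent_stable_def
proof (intro conjI allI impI)
  fix k z \<tau>
  assume "\<alpha> \<le> k" "\<gamma> \<le> k + z"
  then have "kpsat p (descent (Suc k) z \<tau>) 0 = kpsat p (descent k z \<tau>) 0"
    and "kpsat q (descent (Suc k) z \<tau>) 0 = kpsat q (descent k z \<tau>) 0"
    using descent_stable_stretch[OF p] descent_stable_stretch[OF q] by simp_all
  then show "kpsat (Until p q) (descent (Suc k) z \<tau>) 0 = kpsat (Until p q) (descent k z \<tau>) 0"
    using kpsat_Until_descent_Suc[of p q k z \<tau>] ks_psat_Until_unfold[of _ _ p q "descent k z \<tau>" 0]
    by blast
next
  fix k z \<tau>
  assume "\<beta> \<le> z"
  then have "kpsat p (descent k (Suc z) \<tau>) 0 = kpsat p (descent k z \<tau>) 0"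
    and "kpsat q (descent k (Suc z) \<tau>) 0 = kpsat q (descent k z \<tau>) 0" for k
    using descent_stable_raise[OF p] descent_stable_raise[OF q] by simp_all
  then show "kpsat (Until p q) (descent k (Suc z) \<tau>) 0 = kpsat (Until p q) (descent k z \<tau>) 0"
    by (induction k) (simp_all only: kpsat_Until_descent_0 kpsat_Until_descent_Suc)
qed

lemma ex_split_Suc_iff:
  assumes stretch: "\<And>k z. \<alpha> \<le> k \<Longrightarrow> \<gamma> \<le> k + z \<Longrightarrow> P (Suc k) z = P k z"
    and raise: "\<And>k z. \<beta> \<le> z \<Longrightarrow> P k (Suc z) = P k z"
    and "1 \<le> \<beta>" "\<alpha> + \<beta> \<le> a" "\<gamma> \<le> a"
  shows "(\<exists>k z. 1 \<le> z \<and> k + z = Suc a \<and> P k z) \<longleftrightarrow> (\<exists>k z. 1 \<le> z \<and> k + z = a \<and> P k z)"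
proof
  assume "\<exists>k z. 1 \<le> z \<and> k + z = Suc a \<and> P k z"
  then obtain k z where kz: "1 \<le> z" "k + z = Suc a" "P k z" by blast
  show "\<exists>k z. 1 \<le> z \<and> k + z = a \<and> P k z"
  proof (cases "\<alpha> < k")
    case True
    then obtain k' where "k = Suc k'" "\<alpha> \<le> k'" by (cases k) auto
    then have "1 \<le> z \<and> k' + z = a \<and> P k' z" using stretch kz assms(5) by auto
    then show ?thesis by blast
  next
    case False
    then obtain z' where "z = Suc z'" "\<beta> \<le> z'" using kz assms(4) by (cases z) auto
    then have "1 \<le> z' \<and> k + z' = a \<and> P k z'" using raise kz assms(3) by auto
    then show ?thesis by blast
  qed
next
  assume "\<exists>k z. 1 \<le> z \<and> k + z = a \<and> P k z"
  then obtain k z where kz: "1 \<le> z" "k + z = a" "P k z" by blast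
  show "\<exists>k z. 1 \<le> z \<and> k + z = Suc a \<and> P k z"
  proof (cases "\<alpha> \<le> k")
    case True
    then have "1 \<le> z \<and> Suc k + z = Suc a \<and> P (Suc k) z" using stretch kz assms(5) by auto
    then show ?thesis by blast
  next
    case False
    then have "1 \<le> Suc z \<and> k + Suc z = Suc a \<and> P k (Suc z)" using raise kz assms(4) by auto
    then show ?thesis by blast
  qed
qed

lemma ssize_psize_pos:
  fixes f :: "'a sform" and q :: "'a pform"
  shows "1 \<le> ssize f" "1 \<le> psize q"
  by (induction f and q) simp_all

definition size_stable :: "unit pform \<Rightarrow> bool" where
  "size_stable q \<longleftrightarrow>
     (\<exists>\<alpha> \<beta> \<gamma>. 1 \<le> \<beta> \<and> \<alpha> + \<beta> \<le> psize q + 1 \<and> \<gamma> \<le> psize q + 1 \<and> descent_stable q \<alpha> \<beta> \<gamma>)"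

lemma size_stableI:
  "descent_stable q \<alpha> \<beta> \<gamma> \<Longrightarrow> 1 \<le> \<beta> \<Longrightarrow> \<alpha> + \<beta> \<le> psize q + 1 \<Longrightarrow> \<gamma> \<le> psize q + 1 \<Longrightarrow>
   size_stable q"
  unfolding size_stable_def by blast

lemma ksat_Ex_Main_Suc:
  assumes "size_stable q" and "psize q < a"
  shows "ksat (Ex q) (Main (Suc a)) = ksat (Ex q) (Main a)"
proof -
  obtain \<alpha> \<beta> \<gamma> where q: "descent_stable q \<alpha> \<beta> \<gamma>"
    and "1 \<le> \<beta>" "\<alpha> + \<beta> \<le> psize q + 1" "\<gamma> \<le> psize q + 1"
    using assms(1) unfolding size_stable_def by blast
  have "\<alpha> + \<beta> \<le> a" "\<gamma> \<le> a" using assms(2) \<open>\<alpha> + \<beta> \<le> _\<close> \<open>\<gamma> \<le> _\<close> by linarith+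
  have "(\<exists>k z. 1 \<le> z \<and> k + z = Suc a \<and> kpsat q (descent k z branch_path) 0) \<longleftrightarrow>
        (\<exists>k z. 1 \<le> z \<and> k + z = a \<and> kpsat q (descent k z branch_path) 0)"
    using descent_stable_stretch[OF q] descent_stable_raise[OF q] \<open>1 \<le> \<beta>\<close> \<open>\<alpha> + \<beta> \<le> a\<close> \<open>\<gamma> \<le> a\<close>
    by (rule ex_split_Suc_iff[where P = "\<lambda>k z. kpsat q (descent k z branch_path) 0"])
  moreover have "kpsat q (descent (Suc a) 0 \<tau>) 0 = kpsat q (descent a 0 \<tau>) 0" for \<tau>
    using \<open>\<alpha> + \<beta> \<le> a\<close> \<open>\<gamma> \<le> a\<close> by (intro descent_stable_stretch[OF q]) simp_all
  ultimately show ?thesis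
    unfolding ks_ssat.simps kpath_Main_iff by blast
qed

lemma ksat_Dk_Main_Suc:
  assumes "ksat g (Main (Suc a)) = ksat g (Main a)"
  shows "ksat (Dk j g) (Main (Suc (Suc a))) = ksat (Dk j g) (Main (Suc a))"
proof -
  let ?h = "\<lambda>v. if v = Main (Suc a) then Main a else v"
  have "bij_betw ?h {Main (Suc a), Branch} {Main a, Branch}"
    by (auto simp: bij_betw_def)
  then show ?thesis
    unfolding ks_ssat.simps kind_succ.simps
    by (rule bij_betw_ex_card_subset_iff) (use assms in auto)
qed

lemma size_stable_PState:
  assumes "\<And>a. ssize f \<le> a \<Longrightarrow> ksat f (Main (Suc a)) = ksat f (Main a)"
  shows "size_stable (PState f)"
  using descent_stable_PState[OF assms] ssize_psize_pos(1)[of f] by (rule size_stableI) simp_all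

lemma size_stable_PNot:
  assumes "size_stable q"
  shows "size_stable (PNot q)"
proof -
  obtain \<alpha> \<beta> \<gamma> where q: "descent_stable q \<alpha> \<beta> \<gamma>"
    and "1 \<le> \<beta>" "\<alpha> + \<beta> \<le> psize q + 1" "\<gamma> \<le> psize q + 1"
    using assms unfolding size_stable_def by blast
  then show ?thesis by (intro size_stableI[OF descent_stable_PNot[OF q]]) simp_all
qed

lemma size_stable_Next:
  assumes "size_stable q"
  shows "size_stable (Next q)"
proof -
  obtain \<alpha> \<beta> \<gamma> where q: "descent_stable q \<alpha> \<beta> \<gamma>"
    and "1 \<le> \<beta>" "\<alpha> + \<beta> \<le> psize q + 1" "\<gamma> \<le> psize q + 1"
    using assms unfolding size_stable_def by blast
  then show ?thesis by (intro size_stableI[OF descent_stable_Next[OF q]]) simp_all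
qed

lemma size_stable_binary:
  assumes "size_stable p" and "size_stable q"
    and r: "\<And>\<alpha> \<beta> \<gamma>. descent_stable p \<alpha> \<beta> \<gamma> \<Longrightarrow> descent_stable q \<alpha> \<beta> \<gamma> \<Longrightarrow> descent_stable r \<alpha> \<beta> \<gamma>"
    and "psize r = 1 + psize p + psize q"
  shows "size_stable r"
proof -
  obtain \<alpha>1 \<beta>1 \<gamma>1 \<alpha>2 \<beta>2 \<gamma>2 where
    p: "descent_stable p \<alpha>1 \<beta>1 \<gamma>1" and q: "descent_stable q \<alpha>2 \<beta>2 \<gamma>2"
    and "1 \<le> \<beta>1" "\<alpha>1 + \<beta>1 \<le> psize p + 1" "\<gamma>1 \<le> psize p + 1"
    and "\<alpha>2 + \<beta>2 \<le> psize q + 1" "\<gamma>2 \<le> psize q + 1"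
    using assms(1,2) unfolding size_stable_def by blast
  have "descent_stable r (max \<alpha>1 \<alpha>2) (max \<beta>1 \<beta>2) (max \<gamma>1 \<gamma>2)"
    using descent_stable_mono[OF p max.cobounded1 max.cobounded1 max.cobounded1]
      descent_stable_mono[OF q max.cobounded2 max.cobounded2 max.cobounded2]
    by (rule r)
  then show ?thesis by (rule size_stableI) (use assms(4) \<open>1 \<le> \<beta>1\<close> \<open>\<alpha>1 + \<beta>1 \<le> _\<close> \<open>\<alpha>2 + \<beta>2 \<le> _\<close>
      \<open>\<gamma>1 \<le> _\<close> \<open>\<gamma>2 \<le> _\<close> in simp_all)
qed

theorem ksat_Main_stable:
  shows "ssize f \<le> a \<Longrightarrow> ksat f (Main (Suc a)) = ksat f (Main a)"
    and "size_stable q"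
proof (induction f and q arbitrary: a)
  case (Ex q)
  then show ?case by (intro ksat_Ex_Main_Suc) simp_all
next
  case (Dk j g)
  then obtain a' where "a = Suc a'" "ssize g \<le> a'" by (cases a) auto
  then show ?case using ksat_Dk_Main_Suc[OF Dk.IH] by simp
next
  case (PState f)
  then show ?case by (rule size_stable_PState)
next
  case (PNot q)
  then show ?case by (rule size_stable_PNot)
next
  case (PAnd p q)
  then show ?case by (rule size_stable_binary) (simp_all add: descent_stable_PAnd)
next
  case (Next q)
  then show ?case by (rule size_stable_Next)
next
  case (Until p q)
  then show ?case by (rule size_stable_binary) (simp_all add: descent_stable_Until)
qed simp_all

section \<open>The trees \<open>T\<^sub>N\<close>\<close>

lemma snoc_eq_replicate_iff:
  "xs @ [d] = replicate k x \<longleftrightarrow> k \<noteq> 0 \<and> xs = replicate (k - 1) x \<and> d = x"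
  by (cases k) (auto simp: replicate_append_same[symmetric])

lemma zeros_one_neq_replicate: "replicate i (0::nat) @ 1 # xs \<noteq> replicate k 0"
proof
  assume "replicate i (0::nat) @ 1 # xs = replicate k 0"
  then have "(1::nat) \<in> set (replicate k 0)" by (metis in_set_conv_decomp)
  then show False by simp
qed

lemma zeros_one_eq_iff:
  "replicate i (0::nat) @ 1 # xs = replicate i' 0 @ 1 # ys \<longleftrightarrow> i = i' \<and> xs = ys"
proof (induction i arbitrary: i')
  case 0
  then show ?case by (cases i') auto
next
  case (Suc i)
  then show ?case by (cases i') auto
qed

lemma snoc_eq_zeros_one_zeros_iff:
  "xs @ [d] = replicate i (0::nat) @ 1 # replicate j 0 \<longleftrightarrow>
     (j = 0 \<and> xs = replicate i 0 \<and> d = 1) \<or>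
     (j \<noteq> 0 \<and> xs = replicate i 0 @ 1 # replicate (j - 1) 0 \<and> d = 0)"
  by (cases j) (auto simp: replicate_append_same[symmetric])

lemma zeros_in_Tn: "replicate i 0 \<in> Tn N"
  by (auto simp: Tn_def)

lemma zeros_one_zeros_in_Tn: "i \<noteq> N + 1 \<Longrightarrow> replicate i 0 @ 1 # replicate j 0 \<in> Tn N"
  by (auto simp: Tn_def)

lemma Tn_cases:
  assumes "w \<in> Tn N"
  obtains (main) i where "w = replicate i 0"
    | (side) i j where "i \<noteq> N + 1" and "w = replicate i 0 @ 1 # replicate j 0"
  using assms by (auto simp: Tn_def)

lemma snoc_zeros_in_Tn_iff:
  "replicate i 0 @ [d] \<in> Tn N \<longleftrightarrow> d = 0 \<or> (d = 1 \<and> i \<noteq> N + 1)"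
proof
  assume "replicate i 0 @ [d] \<in> Tn N"
  then show "d = 0 \<or> (d = 1 \<and> i \<noteq> N + 1)"
  proof (cases rule: Tn_cases)
    case (main k)
    then show ?thesis by (simp add: snoc_eq_replicate_iff)
  next
    case (side i' j)
    then show ?thesis unfolding snoc_eq_zeros_one_zeros_iff by auto
  qed
next
  assume "d = 0 \<or> (d = 1 \<and> i \<noteq> N + 1)"
  then show "replicate i 0 @ [d] \<in> Tn N"
    using zeros_in_Tn[of "Suc i" N] zeros_one_zeros_in_Tn[of i N 0]
    by (auto simp: replicate_append_same[symmetric])
qed

lemma snoc_zeros_one_zeros_in_Tn_iff:
  "replicate i 0 @ 1 # replicate j 0 @ [d] \<in> Tn N \<longleftrightarrow> d = 0 \<and> i \<noteq> N + 1"
proof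
  assume "replicate i 0 @ 1 # replicate j 0 @ [d] \<in> Tn N"
  then show "d = 0 \<and> i \<noteq> N + 1"
  proof (cases rule: Tn_cases)
    case (main k)
    then show ?thesis using zeros_one_neq_replicate by blast
  next
    case (side i' j')
    then show ?thesis unfolding zeros_one_eq_iff snoc_eq_replicate_iff by auto
  qed
next
  assume "d = 0 \<and> i \<noteq> N + 1"
  then show "replicate i 0 @ 1 # replicate j 0 @ [d] \<in> Tn N"
    using zeros_one_zeros_in_Tn[of i N "Suc j"] by (simp add: replicate_append_same)
qed

lemma children_snoc: "children T w = (\<lambda>d. w @ [d]) ` {d. w @ [d] \<in> T}"
  by (auto simp: children_def)

lemma children_Tn_zeros:
  "children (Tn N) (replicate i 0) =
     (if i = N + 1 then {replicate i 0 @ [0]} else {replicate i 0 @ [0], replicate i 0 @ [1]})"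
  by (auto simp: children_snoc snoc_zeros_in_Tn_iff)

lemma children_Tn_zeros_one_zeros:
  "i \<noteq> N + 1 \<Longrightarrow>
   children (Tn N) (replicate i 0 @ 1 # replicate j 0) = {replicate i 0 @ 1 # replicate j 0 @ [0]}"
  unfolding children_snoc append_assoc append_Cons snoc_zeros_one_zeros_in_Tn_iff by auto

definition node_kind :: "nat \<Rightarrow> nat list \<Rightarrow> kind" where
  "node_kind N w =
     (if set w \<subseteq> {0} then (if length w \<le> N + 1 then Main (N + 1 - length w) else Main_inf)
      else if last w = 1 then Branch else Tail)"

lemma Ln_eq_kind_lab:
  assumes "w \<in> Tn N"
  shows "Ln N w = kind_lab (node_kind N w)"
  using assms
proof (cases rule: Tn_cases)
  case (main i)
  then show ?thesis
    using zeros_one_neq_replicate[of _ "[]", symmetric] by (auto simp: Ln_def node_kind_def)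
next
  case (side i j)
  show ?thesis
  proof (cases j)
    case 0
    then show ?thesis using side by (auto simp: Ln_def node_kind_def)
  next
    case (Suc j')
    then have "\<not> (\<exists>i'. i' \<noteq> N + 1 \<and> w = replicate i' 0 @ [1])"
      unfolding side(2) zeros_one_eq_iff by simp
    then show ?thesis using side Suc by (simp add: Ln_def node_kind_def)
  qed
qed

lemma bij_betw_node_kind:
  assumes "w \<in> Tn N"
  shows "bij_betw (node_kind N) (children (Tn N) w) (kind_succ (node_kind N w))"
  using assms
proof (cases rule: Tn_cases)
  case (main i)
  consider "i \<le> N" | "i = N + 1" | "N + 1 < i" by linarith
  then show ?thesis
    unfolding main children_Tn_zeros by cases (auto simp: node_kind_def bij_betw_def Suc_diff_le)
next
  case (side i j)
  then show ?thesis
    unfolding side(2) children_Tn_zeros_one_zeros[OF side(1)]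
    by (auto simp: node_kind_def bij_betw_def)
qed

lemma models_Tn_iff_ksat_Main: "models (Tn N) (Ln N) \<phi> \<longleftrightarrow> ksat \<phi> (Main (N + 1))"
proof -
  have "ssat (Tn N) (Ln N) \<phi> [] = ksat \<phi> (node_kind N [])"
    unfolding ssat_eq_ks_ssat_children
  proof (rule ks_sat_covering)
    show "\<forall>y\<in>Tn N. children (Tn N) y \<subseteq> Tn N" by (auto simp: children_def)
    show "\<forall>y\<in>Tn N. kind_lab (node_kind N y) = Ln N y" using Ln_eq_kind_lab by simp
    show "\<forall>y\<in>Tn N. bij_betw (node_kind N) (children (Tn N) y) (kind_succ (node_kind N y))"
      using bij_betw_node_kind by blast
    show "[] \<in> Tn N" using zeros_in_Tn[of 0 N] by simp
  qed
  then show ?thesis by (simp add: models_def node_kind_def)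
qed

theorem lemma23:
  fixes n :: nat and \<phi> :: "unit sform"
  assumes "n \<ge> 1" and "wf_s \<phi>" and "ssize \<phi> \<le> n"
  shows "models (Tn n) (Ln n) \<phi> \<longleftrightarrow> models (Tn (n + 1)) (Ln (n + 1)) \<phi>"
proof -
  have "ksat \<phi> (Main (Suc (n + 1))) = ksat \<phi> (Main (n + 1))"
    using assms(3) by (intro ksat_Main_stable(1)) simp
  then show ?thesis by (simp add: models_Tn_iff_ksat_Main)
qed

end
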